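(* Let $\mathbb{I}=\operatorname{diag}(I_1,I_2,I_3)$ with $I_i>0$, let $m>0$, $M>0$, $\bar m=m+M$, $l>0$, $\mathrm{g}>0$, and let $\boldsymbol\chi\in\mathbb{R}^3$ be a unit vector. Consider the reduced Lagrangian $$\ell(\boldsymbol\Omega,\mathbf v,\boldsymbol\Gamma,h)=K(\boldsymbol\Omega,\mathbf v)-\mathrm{g}\,ml\,\boldsymbol\chi\cdot\boldsymbol\Gamma-\mathrm{g}\,\bar m\,h,\qquad K(\boldsymbol\Omega,\mathbf v)=\tfrac12\mathbb{G}_{\alpha\beta}\Omega^\alpha\Omega^\beta+\mathbb{G}_{\alpha b}\Omega^\alpha v^b+\tfrac12\mathbb{G}_{ab}v^av^b,$$ with $(\boldsymbol\Omega,\mathbf v,\boldsymbol\Gamma,h)\in\mathbb{R}^3\times\mathbb{R}^3\times\mathbb{R}^3\times\mathbb{R}$, where the symmetric $6\times6$ matrix $\mathbb{G}$ has blocks $(\mathbb{G}_{\alpha\beta})=\mathbb{I}$, $(\mathbb{G}_{\alpha b})=ml\hat{\boldsymbol\chi}$, $(\mathbb{G}_{a\beta})=-ml\hat{\boldsymbol\chi}$, $(\mathbb{G}_{ab})=\bar m I_{3\times3}$. Let $\rho=(\rho_{ab})$, $\sigma=(\sigma_{ab})$ be invertible constant $3\times 3$ matrices and $\tau=(\tau^a_\alpha)$ a constant $3\times3$ matrix satisfying the matching conditions $$(\mathrm{MC}_1)\ \ \rho_{ab}-\mathbb{G}_{ab}=k\,\delta_{ab}\ \text{for some } k\in\mathbb{R};\qquad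 (\mathrm{MC}_2)\ \ \tau^a_\alpha=(\rho^{ab}-\mathbb{G}^{ab})\mathbb{G}_{b\alpha};\qquad (\mathrm{MC}_3)\ \ \sigma^{ab}=\mathbb{G}^{ab}-\rho^{ab},$$ where upper indices denote entries of inverse matrices (so $(\mathbb{G}^{ab})=(\mathbb{G}_{ab})^{-1}$, $(\rho^{ab})=(\rho_{ab})^{-1}$, $(\sigma^{ab})=(\sigma_{ab})^{-1}$; in particular $\mathbb{G}^{ab}-\rho^{ab}$ is assumed invertible). Define the controlled Lagrangian $$\ell_{\tau,\sigma,\rho}(\boldsymbol\Omega,\mathbf v,\boldsymbol\Gamma)=K_{\tau,\sigma,\rho}(\boldsymbol\Omega,\mathbf v)-\mathrm{g}\,ml\,\boldsymbol\chi\cdot\boldsymbol\Gamma,$$ $$K_{\tau,\sigma,\rho}=K(\Omega^\alpha,\,v^a+\tau^a_\alpha\Omega^\alpha)+\tfrac12\sigma_{ab}\tau^a_\alpha\tau^b_\beta\Omega^\alpha\Omega^\beta+\tfrac12(\rho_{ab}-\mathbb{G}_{ab})\big(v^a+(\mathbb{G}^{ac}\mathbb{G}_{c\alpha}+\tau^a_\alpha)\Omega^\alpha\big)\big(v^b+(\mathbb{G}^{bd}\mathbb{G}_{d\beta}+\tau^b_\beta)\Omega^\beta\big).$$ Consider the controlled equations $$\frac{d}{dt}\frac{\delta\ell}{\delta\boldsymbol\Omega}=\frac{\delta\ell}{\delta\boldsymbol\Omega}\times\boldsymbol\Omega+\frac{\delta\ell}{\delta\mathbf v}\times\mathbf v+\frac{\delta\ell}{\delta\boldsymbol\Gamma}\times\boldsymbol\Gamma,\qquad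 \frac{d}{dt}\frac{\delta\ell}{\delta\mathbf v}=\frac{\delta\ell}{\delta\mathbf v}\times\boldsymbol\Omega+\frac{\delta\ell}{\delta h}\boldsymbol\Gamma+\mathbf u,\qquad \dot{\boldsymbol\Gamma}=\boldsymbol\Gamma\times\boldsymbol\Omega,$$ with the control $$\mathbf u=\frac{d}{dt}\Big(\frac{\delta\ell}{\delta\mathbf v}-\frac{\delta\ell_{\tau,\sigma,\rho}}{\delta\mathbf v}\Big)-\Big(\frac{\delta\ell}{\delta\mathbf v}-\frac{\delta\ell_{\tau,\sigma,\rho}}{\delta\mathbf v}\Big)\times\boldsymbol\Omega+\bar m\,\mathrm{g}\,\boldsymbol\Gamma,$$ and the free equations for the controlled Lagrangian $$\frac{d}{dt}\frac{\delta\ell_{\tau,\sigma,\rho}}{\delta\boldsymbol\Omega}=\frac{\delta\ell_{\tau,\sigma,\rho}}{\delta\boldsymbol\Omega}\times\boldsymbol\Omega+\frac{\delta\ell_{\tau,\sigma,\rho}}{\delta\mathbf v}\times\mathbf v+\frac{\delta\ell_{\tau,\sigma,\rho}}{\delta\boldsymbol\Gamma}\times\boldsymbol\Gamma,\qquad \frac{d}{dt}\frac{\delta\ell_{\tau,\sigma,\rho}}{\delta\mathbf v}=\frac{\delta\ell_{\tau,\sigma,\rho}}{\delta\mathbf v}\times\boldsymbol\Omega,\qquad\dot{\boldsymbol\Gamma}=\boldsymbol\Gamma\times\boldsymbol\Omega.$$ Then a $C^1$ curve $t\mapsto(\boldsymbol\Omega(t),\mathbf v(t),\boldsymbol\Gamma(t))$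 solves the controlled equations with this control if and only if it solves the free equations for $\ell_{\tau,\sigma,\rho}$. (Under $(\mathrm{MC}_1)$, one has $\frac{\delta\ell_{\tau,\sigma,\rho}}{\delta\mathbf v}-\frac{\delta\ell}{\delta\mathbf v}=k\mathbf v$ with $k=\rho_{ab}-\mathbb G_{ab}$ scalar, and $\rho_{ab}=\rho\,\delta_{ab}$ for a scalar $\rho$.)
   Context: Indices: Greek indices $\alpha,\beta\in\{1,2,3\}$ refer to components of $\boldsymbol\Omega$, Latin indices $a,b,c,d\in\{1,2,3\}$ to components of $\mathbf v$; repeated indices are summed. The hat map $\hat{\ }:\mathbb{R}^3\to\mathfrak{so}(3)$ sends $\mathbf x$ to the skew-symmetric matrix with $\hat{\mathbf x}\mathbf y=\mathbf x\times\mathbf y$. For a function $f$ on a vector space, $\delta f/\delta x$ denotes its gradient (partial derivative with respect to the indicated variable, identified with a vector via the dot product); e.g. $\delta\ell/\delta\boldsymbol\Gamma=-\mathrm{g}ml\boldsymbol\chi$ and $\delta\ell/\delta h=-\bar m\mathrm{g}$. Here $\boldsymbol\Omega$ is the body angular velocity of a top on a movable base, $\mathbf v$ the base velocity in the body frame, $\boldsymbol\Gamma$ the vertical upward direction in the body frame and $h$ the base height. *)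

theory Defs
  imports "HOL-Analysis.Analysis" "HOL-Analysis.Cross3"
begin

unbundle cross3_syntax


definition hat :: "real^3 \<Rightarrow> real^3^3" where
  "hat x = vector [vector [0, -(x$3), x$2],
                   vector [x$3, 0, -(x$1)],
                   vector [-(x$2), x$1, 0]]"

definition grad :: "('a::real_inner \<Rightarrow> real) \<Rightarrow> 'a \<Rightarrow> 'a" where
  "grad f x = (THE D. GDERIV f x :> D)"

definition G_OO :: "real \<Rightarrow> real \<Rightarrow> real \<Rightarrow> real^3^3" where
  "G_OO I1 I2 I3 = vector [vector [I1, 0, 0], vector [0, I2, 0], vector [0, 0, I3]]"

definition G_Ov :: "real \<Rightarrow> real \<Rightarrow> real^3 \<Rightarrow> real^3^3" where
  "G_Ov m l chi = (m * l) *\<^sub>R hat chi"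

definition G_vO :: "real \<Rightarrow> real \<Rightarrow> real^3 \<Rightarrow> real^3^3" where
  "G_vO m l chi = - ((m * l) *\<^sub>R hat chi)"

definition G_vv :: "real \<Rightarrow> real \<Rightarrow> real^3^3" where
  "G_vv m M = (m + M) *\<^sub>R mat 1"

definition Kin :: "real \<Rightarrow> real \<Rightarrow> real \<Rightarrow> real \<Rightarrow> real \<Rightarrow> real \<Rightarrow> real^3
                   \<Rightarrow> real^3 \<Rightarrow> real^3 \<Rightarrow> real" where
  "Kin I1 I2 I3 m M l chi Om v =
     1/2 * (Om \<bullet> (G_OO I1 I2 I3 *v Om)) + Om \<bullet> (G_Ov m l chi *v v)
     + 1/2 * (v \<bullet> (G_vv m M *v v))"

definition ell :: "real \<Rightarrow> real \<Rightarrow> real \<Rightarrow> real \<Rightarrow> real \<Rightarrow> real \<Rightarrow> real \<Rightarrow> real^3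
                   \<Rightarrow> real^3 \<Rightarrow> real^3 \<Rightarrow> real^3 \<Rightarrow> real \<Rightarrow> real" where
  "ell I1 I2 I3 m M l g chi Om v Ga h =
     Kin I1 I2 I3 m M l chi Om v - g * m * l * (chi \<bullet> Ga) - g * (m + M) * h"

definition Kin_c :: "real \<Rightarrow> real \<Rightarrow> real \<Rightarrow> real \<Rightarrow> real \<Rightarrow> real \<Rightarrow> real^3
                   \<Rightarrow> real^3^3 \<Rightarrow> real^3^3 \<Rightarrow> real^3^3 \<Rightarrow> real^3 \<Rightarrow> real^3 \<Rightarrow> real" where
  "Kin_c I1 I2 I3 m M l chi \<tau> \<sigma> \<rho> Om v =
     (let w = v + ((matrix_inv (G_vv m M) ** G_vO m l chi) + \<tau>) *v Om
      in Kin I1 I2 I3 m M l chi Om (v + \<tau> *v Om)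
         + 1/2 * ((\<tau> *v Om) \<bullet> (\<sigma> *v (\<tau> *v Om)))
         + 1/2 * (w \<bullet> ((\<rho> - G_vv m M) *v w)))"

definition ell_c :: "real \<Rightarrow> real \<Rightarrow> real \<Rightarrow> real \<Rightarrow> real \<Rightarrow> real \<Rightarrow> real \<Rightarrow> real^3
                   \<Rightarrow> real^3^3 \<Rightarrow> real^3^3 \<Rightarrow> real^3^3 \<Rightarrow> real^3 \<Rightarrow> real^3 \<Rightarrow> real^3 \<Rightarrow> real" where
  "ell_c I1 I2 I3 m M l g chi \<tau> \<sigma> \<rho> Om v Ga =
     Kin_c I1 I2 I3 m M l chi \<tau> \<sigma> \<rho> Om v - g * m * l * (chi \<bullet> Ga)"

definition controlled_eqs ::
  "(real^3 \<Rightarrow> real^3 \<Rightarrow> real^3 \<Rightarrow> real \<Rightarrow> real) \<Rightarrow> (real^3 \<Rightarrow> real^3 \<Rightarrow> real^3 \<Rightarrow> real)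
   \<Rightarrow> real \<Rightarrow> real set \<Rightarrow> (real \<Rightarrow> real^3) \<Rightarrow> (real \<Rightarrow> real^3) \<Rightarrow> (real \<Rightarrow> real^3)
   \<Rightarrow> (real \<Rightarrow> real) \<Rightarrow> bool" where
  "controlled_eqs L Lc c T Om v Ga h \<longleftrightarrow>
     (let dLO = (\<lambda>t. grad (\<lambda>X. L X (v t) (Ga t) (h t)) (Om t));
          dLv = (\<lambda>t. grad (\<lambda>X. L (Om t) X (Ga t) (h t)) (v t));
          dLG = (\<lambda>t. grad (\<lambda>X. L (Om t) (v t) X (h t)) (Ga t));
          dLh = (\<lambda>t. deriv (\<lambda>y. L (Om t) (v t) (Ga t) y) (h t));
          dLcv = (\<lambda>t. grad (\<lambda>X. Lc (Om t) X (Ga t)) (v t));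
          u = (\<lambda>t. vector_derivative (\<lambda>s. dLv s - dLcv s) (at t)
                   - (dLv t - dLcv t) \<times> Om t + c *\<^sub>R Ga t)
      in \<forall>t\<in>T.
           (dLO has_vector_derivative (dLO t \<times> Om t + dLv t \<times> v t + dLG t \<times> Ga t)) (at t)
         \<and> (dLv has_vector_derivative (dLv t \<times> Om t + dLh t *\<^sub>R Ga t + u t)) (at t)
         \<and> (Ga has_vector_derivative (Ga t \<times> Om t)) (at t))"

definition free_eqs ::
  "(real^3 \<Rightarrow> real^3 \<Rightarrow> real^3 \<Rightarrow> real) \<Rightarrow> real set
   \<Rightarrow> (real \<Rightarrow> real^3) \<Rightarrow> (real \<Rightarrow> real^3) \<Rightarrow> (real \<Rightarrow> real^3) \<Rightarrow> bool" where
  "free_eqs Lc T Om v Ga \<longleftrightarrow>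
     (let dO = (\<lambda>t. grad (\<lambda>X. Lc X (v t) (Ga t)) (Om t));
          dv = (\<lambda>t. grad (\<lambda>X. Lc (Om t) X (Ga t)) (v t));
          dG = (\<lambda>t. grad (\<lambda>X. Lc (Om t) (v t) X) (Ga t))
      in \<forall>t\<in>T.
           (dO has_vector_derivative (dO t \<times> Om t + dv t \<times> v t + dG t \<times> Ga t)) (at t)
         \<and> (dv has_vector_derivative (dv t \<times> Om t)) (at t)
         \<and> (Ga has_vector_derivative (Ga t \<times> Om t)) (at t))"

end

theory Submission
  imports Defs
begin

(* Since G_vv = (m+M) I, the matching conditions force \<rho> = (m+M+k) I, \<sigma> to be scalar
   and \<tau> to be a multiple of G_vO; completing the square then gives
     \<ell>_{\<tau>,\<sigma>,\<rho>}(\<Omega>, v, \<Gamma>) = \<ell>(\<Omega>, v, \<Gamma>, h) + (m+M) g h + k/2 |v|^2.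
   Hence the \<Omega>- and \<Gamma>-gradients of the two Lagrangians agree, the v-gradient is shifted by
   k v, and (\<delta>\<ell>/\<delta>v + k v) \<times> v = \<delta>\<ell>/\<delta>v \<times> v.  The control cancels the gravity
   force -(m+M) g \<Gamma> and turns the v-equation of \<ell> into that of \<ell>_{\<tau>,\<sigma>,\<rho>}. *)

lemma mat_one_neq_zero: "(mat 1 :: 'a::zero_neq_one^'n^'n) \<noteq> 0"
proof
  fix i :: 'n
  assume "(mat 1 :: 'a^'n^'n) = 0"
  then have "(mat 1 :: 'a^'n^'n) $ i $ i = 0" by simp
  then show False by (simp add: mat_def)
qed

lemma matrix_inv_right:
  fixes A :: "'a::semiring_1^'n^'m"
  assumes "invertible A"
  shows "A ** matrix_inv A = mat 1"
  using someI_ex[OF assms[unfolded invertible_def]] unfolding matrix_inv_def by blast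

lemma matrix_inv_left:
  fixes A :: "'a::semiring_1^'n^'m"
  assumes "invertible A"
  shows "matrix_inv A ** A = mat 1"
  using someI_ex[OF assms[unfolded invertible_def]] unfolding matrix_inv_def by blast

lemma matrix_inv_unique:
  fixes A B :: "'a::field^'n^'n"
  assumes AB: "A ** B = mat 1"
  shows "matrix_inv A = B"
proof -
  have "invertible A" using AB invertible_right_inverse by blast
  have "B ** A = mat 1" using AB matrix_left_right_inverse by blast
  then have "matrix_inv A = (B ** A) ** matrix_inv A" by simp
  also have "\<dots> = B" using matrix_inv_right[OF \<open>invertible A\<close>] by (metis matrix_mul_assoc matrix_mul_rid)
  finally show ?thesis .
qed

lemma matrix_inv_matrix_inv:
  fixes A :: "'a::field^'n^'n"
  assumes "invertible A"
  shows "matrix_inv (matrix_inv A) = A"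
  using matrix_inv_left[OF assms] by (rule matrix_inv_unique)

lemma matrix_inv_scaleR_mat_one:
  fixes c :: real
  assumes "c \<noteq> 0"
  shows "matrix_inv (c *\<^sub>R (mat 1 :: real^'n^'n)) = inverse c *\<^sub>R mat 1"
  by (rule matrix_inv_unique) (simp add: assms matrix_scalar_ac flip: scalar_matrix_assoc)

lemma matching_conditions_scalar:
  fixes G \<rho> \<sigma> :: "real^'n^'n" and c k :: real
  assumes "c \<noteq> 0" and G: "G = c *\<^sub>R mat 1"
    and "invertible \<rho>" "invertible \<sigma>"
    and MC1: "\<rho> - G = k *\<^sub>R mat 1"
    and MC3: "matrix_inv \<sigma> = matrix_inv G - matrix_inv \<rho>"
  shows "c + k \<noteq> 0" "k \<noteq> 0"
    and "matrix_inv \<rho> = inverse (c + k) *\<^sub>R mat 1"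
    and "\<sigma> = (c * (c + k) / k) *\<^sub>R mat 1"
proof -
  have \<rho>: "\<rho> = (c + k) *\<^sub>R mat 1"
    using MC1 G by (simp add: algebra_simps scaleR_add_left)
  show ck: "c + k \<noteq> 0"
  proof
    assume "c + k = 0"
    then have "\<rho> = 0" using \<rho> by simp
    then show False using matrix_inv_right[OF \<open>invertible \<rho>\<close>] mat_one_neq_zero by auto
  qed
  show irho: "matrix_inv \<rho> = inverse (c + k) *\<^sub>R mat 1"
    using ck by (simp add: \<rho> matrix_inv_scaleR_mat_one)
  define d where "d = inverse c - inverse (c + k)"
  have isig: "matrix_inv \<sigma> = d *\<^sub>R mat 1"
    using MC3 irho \<open>c \<noteq> 0\<close> by (simp add: G d_def matrix_inv_scaleR_mat_one scaleR_diff_left)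
  have d: "d = k / (c * (c + k))"
    using \<open>c \<noteq> 0\<close> ck by (simp add: d_def field_simps)
  show k0: "k \<noteq> 0"
  proof
    assume "k = 0"
    then have "matrix_inv \<sigma> = 0" using isig d by simp
    then show False using matrix_inv_left[OF \<open>invertible \<sigma>\<close>] mat_one_neq_zero by auto
  qed
  have "\<sigma> = matrix_inv (d *\<^sub>R mat 1)"
    using matrix_inv_matrix_inv[OF \<open>invertible \<sigma>\<close>] isig by simp
  also have "\<dots> = (c * (c + k) / k) *\<^sub>R mat 1"
    using \<open>c \<noteq> 0\<close> ck k0 by (simp add: d matrix_inv_scaleR_mat_one)
  finally show "\<sigma> = (c * (c + k) / k) *\<^sub>R mat 1" .
qed

lemma matrix_vector_mult_uminus_left: "(- A) *v x = - (A *v (x :: 'a::ring_1^'n))"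
  by (simp add: matrix_vector_mult_def vec_eq_iff sum_negf)

lemma hat_mult: "hat x *v y = x \<times> y"
  by (simp add: hat_def matrix_vector_mult_def cross3_simps)

lemma G_Ov_mult: "G_Ov m l chi *v x = (m * l) *\<^sub>R (chi \<times> x)"
  by (simp add: G_Ov_def hat_mult flip: scaleR_matrix_vector_assoc)

lemma G_vO_mult: "G_vO m l chi *v x = - (m * l) *\<^sub>R (chi \<times> x)"
  by (simp add: G_vO_def G_Ov_mult[unfolded G_Ov_def] matrix_vector_mult_uminus_left)

lemma Kin_eq:
  "Kin I1 I2 I3 m M l chi Om X =
     1/2 * (Om \<bullet> (G_OO I1 I2 I3 *v Om)) + (G_vO m l chi *v Om) \<bullet> X + (m + M) / 2 * (X \<bullet> X)"
proof -
  have "Om \<bullet> (chi \<times> X) = - ((chi \<times> Om) \<bullet> X)"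
    by (simp add: cross3_simps)
  then show ?thesis
    by (simp add: Kin_def G_Ov_mult G_vO_mult G_vv_def algebra_simps
        flip: scaleR_matrix_vector_assoc)
qed

lemma Kin_c_eq_Kin:
  assumes "m + M \<noteq> 0" "invertible \<rho>" "invertible \<sigma>"
    and MC1: "\<rho> - G_vv m M = k *\<^sub>R mat 1"
    and MC2: "\<tau> = (matrix_inv \<rho> - matrix_inv (G_vv m M)) ** G_vO m l chi"
    and MC3: "matrix_inv \<sigma> = matrix_inv (G_vv m M) - matrix_inv \<rho>"
  shows "Kin_c I1 I2 I3 m M l chi \<tau> \<sigma> \<rho> Om X = Kin I1 I2 I3 m M l chi Om X + k/2 * (X \<bullet> X)"
proof -
  define c where "c = m + M"
  have "c \<noteq> 0" using assms(1) by (simp add: c_def)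
  have G: "G_vv m M = c *\<^sub>R mat 1" by (simp add: G_vv_def c_def)
  note scalar = matching_conditions_scalar[OF \<open>c \<noteq> 0\<close> G assms(2,3) MC1 MC3]
  define p q s where "p = inverse c" and "q = inverse (c + k)" and "s = c * (c + k) / k"
  have iG: "matrix_inv (G_vv m M) = p *\<^sub>R mat 1"
    using \<open>c \<noteq> 0\<close> by (simp add: G p_def matrix_inv_scaleR_mat_one)
  define y where "y = G_vO m l chi *v Om"
  have \<tau>: "\<tau> *v Om = (q - p) *\<^sub>R y"
    by (simp add: MC2 scalar(3) iG y_def q_def matrix_vector_mult_diff_rdistrib scaleR_diff_left
        flip: matrix_vector_mul_assoc scaleR_matrix_vector_assoc divideR_right)
  have w: "(matrix_inv (G_vv m M) ** G_vO m l chi + \<tau>) *v Om = q *\<^sub>R y"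
    by (simp add: iG \<tau> y_def matrix_vector_mult_add_rdistrib algebra_simps
        flip: matrix_vector_mul_assoc scaleR_matrix_vector_assoc)
  have "p - q = k / (c * (c + k))"
    using \<open>c \<noteq> 0\<close> scalar(1) by (simp add: p_def q_def field_simps)
  then have "c * p = 1" "(c + k) * q = 1" "s * (p - q) = 1"
    using \<open>c \<noteq> 0\<close> scalar(1,2) by (simp_all add: p_def q_def s_def)
  \<comment> \<open>Both sides are quadratic forms in X and y; these relations make the y \<bullet> X and y \<bullet> y
      coefficients of the left-hand side collapse to those of the right-hand side.\<close>
  then show ?thesis
    unfolding Kin_c_def Let_def w \<tau> Kin_eq MC1 scalar(4)[folded s_def] y_def[symmetric] c_def[symmetric]
    by (simp add: inner_add_left inner_add_right inner_commute[of X y] algebra_simps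
        flip: scaleR_matrix_vector_assoc) algebra
qed

lemma grad_eqI:
  assumes "GDERIV f x :> D"
  shows "grad f x = D"
proof -
  have "D' = D" if "GDERIV f x :> D'" for D'
  proof -
    have "(\<lambda>h. h \<bullet> D') = (\<lambda>h. h \<bullet> D)"
      using has_derivative_unique that assms unfolding gderiv_def by blast
    then show ?thesis by (metis vector_eq_ldot)
  qed
  then show ?thesis unfolding grad_def using assms by blast
qed

lemma grad_add_const: "grad (\<lambda>x. f x + C) x = grad f x"
proof -
  have "GDERIV (\<lambda>x. f x + C) x :> D \<longleftrightarrow> GDERIV f x :> D" for D
  proof
    assume "GDERIV (\<lambda>x. f x + C) x :> D"
    then have "GDERIV (\<lambda>x. (f x + C) + (- C)) x :> D"
      unfolding gderiv_def by (rule has_derivative_add_const)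
    then show "GDERIV f x :> D" by simp
  qed (unfold gderiv_def, rule has_derivative_add_const)
  then show ?thesis unfolding grad_def by presburger
qed

lemma GDERIV_half_inner_self: "GDERIV (\<lambda>X. b / 2 * (X \<bullet> X)) x :> b *\<^sub>R x"
  unfolding gderiv_def
  by (rule derivative_eq_intros refl | simp add: inner_commute algebra_simps)+

lemma GDERIV_quadratic: "GDERIV (\<lambda>X. C + X \<bullet> w + b / 2 * (X \<bullet> X)) x :> w + b *\<^sub>R x"
proof -
  have "GDERIV (\<lambda>X. X \<bullet> w) x :> w"
    unfolding gderiv_def by (rule derivative_eq_intros refl | simp add: inner_commute)+
  then show ?thesis
    using GDERIV_add[OF GDERIV_add[OF GDERIV_const] GDERIV_half_inner_self] by simp
qed

lemma grad_add_half_inner_self: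
  assumes "GDERIV f x :> D"
  shows "grad (\<lambda>X. f X + k / 2 * (X \<bullet> X)) x = grad f x + k *\<^sub>R x"
  using GDERIV_add[OF assms GDERIV_half_inner_self] assms by (simp add: grad_eqI)

lemma momentum_equation_shift_iff:
  fixes F v Om Ga :: "real \<Rightarrow> real^3"
  assumes v: "(v has_vector_derivative v') (at t)"
  shows "(F has_vector_derivative
            F t \<times> Om t + (- c) *\<^sub>R Ga t
            + (vector_derivative (\<lambda>s. F s - (F s + k *\<^sub>R v s)) (at t)
               - (F t - (F t + k *\<^sub>R v t)) \<times> Om t + c *\<^sub>R Ga t)) (at t)
     \<longleftrightarrow> ((\<lambda>s. F s + k *\<^sub>R v s) has_vector_derivative (F t + k *\<^sub>R v t) \<times> Om t) (at t)"
proof -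
  have kv: "((\<lambda>s. k *\<^sub>R v s) has_vector_derivative k *\<^sub>R v') (at t)"
    by (rule bounded_linear.has_vector_derivative[OF bounded_linear_scaleR_right v])
  have "((\<lambda>s. F s - (F s + k *\<^sub>R v s)) has_vector_derivative - (k *\<^sub>R v')) (at t)"
    using has_vector_derivative_minus[OF kv] by simp
  then have u: "vector_derivative (\<lambda>s. F s - (F s + k *\<^sub>R v s)) (at t) = - (k *\<^sub>R v')"
    by (rule vector_derivative_at)
  define E where "E = F t \<times> Om t + k *\<^sub>R (v t \<times> Om t) - k *\<^sub>R v'"
  have lhs: "F t \<times> Om t + (- c) *\<^sub>R Ga t
            + (vector_derivative (\<lambda>s. F s - (F s + k *\<^sub>R v s)) (at t)
               - (F t - (F t + k *\<^sub>R v t)) \<times> Om t + c *\<^sub>R Ga t) = E"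
    unfolding u by (simp add: E_def cross_mult_left)
  have rhs: "(F t + k *\<^sub>R v t) \<times> Om t = E + k *\<^sub>R v'"
    by (simp add: E_def cross_add_left cross_mult_left)
  have "(F has_vector_derivative E) (at t)
        \<longleftrightarrow> ((\<lambda>s. F s + k *\<^sub>R v s) has_vector_derivative E + k *\<^sub>R v') (at t)"
  proof
    assume "(F has_vector_derivative E) (at t)"
    then show "((\<lambda>s. F s + k *\<^sub>R v s) has_vector_derivative E + k *\<^sub>R v') (at t)"
      using kv by (rule has_vector_derivative_add)
  next
    assume "((\<lambda>s. F s + k *\<^sub>R v s) has_vector_derivative E + k *\<^sub>R v') (at t)"
    from has_vector_derivative_diff[OF this kv] show "(F has_vector_derivative E) (at t)"
      by simp
  qed
  then show ?thesis by (simp only: lhs rhs)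
qed

lemma controlled_eqs_iff_free_eqs:
  fixes L :: "real^3 \<Rightarrow> real^3 \<Rightarrow> real^3 \<Rightarrow> real \<Rightarrow> real"
    and Lc :: "real^3 \<Rightarrow> real^3 \<Rightarrow> real^3 \<Rightarrow> real"
  assumes shift: "\<And>W X Gm y. Lc W X Gm = L W X Gm y + c * y + k / 2 * (X \<bullet> X)"
    and grad_v: "\<And>W X Gm y. \<exists>D. GDERIV (\<lambda>X. L W X Gm y) X :> D"
    and v: "\<And>t. t \<in> T \<Longrightarrow> v differentiable at t"
  shows "controlled_eqs L Lc c T Om v Ga h \<longleftrightarrow> free_eqs Lc T Om v Ga"
proof -
  have gO: "grad (\<lambda>X. Lc X (v t) (Ga t)) (Om t) = grad (\<lambda>X. L X (v t) (Ga t) (h t)) (Om t)" for t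
    by (simp add: shift[where y = "h t"] add.assoc grad_add_const)
  have gG: "grad (\<lambda>X. Lc (Om t) (v t) X) (Ga t) = grad (\<lambda>X. L (Om t) (v t) X (h t)) (Ga t)" for t
    by (simp add: shift[where y = "h t"] add.assoc grad_add_const)
  have gv: "grad (\<lambda>X. Lc (Om t) X (Ga t)) (v t)
            = grad (\<lambda>X. L (Om t) X (Ga t) (h t)) (v t) + k *\<^sub>R v t" for t
  proof -
    obtain D where "GDERIV (\<lambda>X. L (Om t) X (Ga t) (h t)) (v t) :> D"
      using grad_v by blast
    then have "GDERIV (\<lambda>X. L (Om t) X (Ga t) (h t) + c * h t) (v t) :> D"
      unfolding gderiv_def by (rule has_derivative_add_const)
    then have "grad (\<lambda>X. L (Om t) X (Ga t) (h t) + c * h t + k / 2 * (X \<bullet> X)) (v t)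
               = grad (\<lambda>X. L (Om t) X (Ga t) (h t) + c * h t) (v t) + k *\<^sub>R v t"
      by (rule grad_add_half_inner_self)
    then show ?thesis
      by (simp only: shift[where y = "h t"] grad_add_const)
  qed
  \<comment> \<open>The shift forces L to be affine in h with slope - c.\<close>
  have dh: "deriv (\<lambda>y. L (Om t) (v t) (Ga t) y) (h t) = - c" for t
  proof -
    have "L (Om t) (v t) (Ga t) y = Lc (Om t) (v t) (Ga t) - c * y - k / 2 * (v t \<bullet> v t)" for y
      by (simp add: shift[where y = y])
    then have "((\<lambda>y. L (Om t) (v t) (Ga t) y) has_real_derivative - c) (at (h t))"
      by (simp only:) (auto intro!: derivative_eq_intros)
    then show ?thesis by (rule DERIV_imp_deriv)
  qed
  have cross_v: "(F + k *\<^sub>R v t) \<times> v t = F \<times> v t" for F t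
    by (simp add: cross_add_left cross_mult_left)
  show ?thesis
    unfolding controlled_eqs_def free_eqs_def Let_def
    apply (simp only: gO gG gv dh cross_v)
    apply (intro ball_cong[OF refl] conj_cong refl)
    apply (rule momentum_equation_shift_iff)
    using v by (simp add: vector_derivative_works)
qed

lemma ell_c_eq_ell:
  assumes "m + M \<noteq> 0" "invertible \<rho>" "invertible \<sigma>"
    and "\<rho> - G_vv m M = k *\<^sub>R mat 1"
    and "\<tau> = (matrix_inv \<rho> - matrix_inv (G_vv m M)) ** G_vO m l chi"
    and "matrix_inv \<sigma> = matrix_inv (G_vv m M) - matrix_inv \<rho>"
  shows "ell_c I1 I2 I3 m M l g chi \<tau> \<sigma> \<rho> W X Gm
         = ell I1 I2 I3 m M l g chi W X Gm y + (m + M) * g * y + k / 2 * (X \<bullet> X)"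
  by (simp add: ell_c_def ell_def Kin_c_eq_Kin[OF assms] algebra_simps)

lemma GDERIV_ell_v:
  "GDERIV (\<lambda>X. ell I1 I2 I3 m M l g chi W X Gm y) X :> G_vO m l chi *v W + (m + M) *\<^sub>R X"
proof -
  have "ell I1 I2 I3 m M l g chi W X' Gm y
        = (1/2 * (W \<bullet> (G_OO I1 I2 I3 *v W)) - g * m * l * (chi \<bullet> Gm) - g * (m + M) * y)
          + X' \<bullet> (G_vO m l chi *v W) + (m + M) / 2 * (X' \<bullet> X')" for X'
    by (simp add: ell_def Kin_eq inner_commute)
  then show ?thesis by (simp only: GDERIV_quadratic)
qed

theorem mainTheorem1:
  fixes I1 I2 I3 m M l g k :: real
    and chi :: "real^3"
    and \<rho> \<sigma> \<tau> :: "real^3^3"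
    and T :: "real set"
    and Om v Ga :: "real \<Rightarrow> real^3"
    and h :: "real \<Rightarrow> real"
  assumes "I1 > 0" "I2 > 0" "I3 > 0" "m > 0" "M > 0" "l > 0" "g > 0"
    and "norm chi = 1"
    and "invertible \<rho>" "invertible \<sigma>"
    and MC1: "\<rho> - G_vv m M = k *\<^sub>R mat 1"
    and MC2: "\<tau> = (matrix_inv \<rho> - matrix_inv (G_vv m M)) ** G_vO m l chi"
    and MC3: "matrix_inv \<sigma> = matrix_inv (G_vv m M) - matrix_inv \<rho>"
    and "open T"
    and "Om C1_differentiable_on T" "v C1_differentiable_on T" "Ga C1_differentiable_on T"
  shows "controlled_eqs (ell I1 I2 I3 m M l g chi) (ell_c I1 I2 I3 m M l g chi \<tau> \<sigma> \<rho>)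
           ((m + M) * g) T Om v Ga h
         \<longleftrightarrow> free_eqs (ell_c I1 I2 I3 m M l g chi \<tau> \<sigma> \<rho>) T Om v Ga"
proof (rule controlled_eqs_iff_free_eqs)
  have "m + M \<noteq> 0" using \<open>m > 0\<close> \<open>M > 0\<close> by simp
  then show "ell_c I1 I2 I3 m M l g chi \<tau> \<sigma> \<rho> W X Gm
             = ell I1 I2 I3 m M l g chi W X Gm y + (m + M) * g * y + k / 2 * (X \<bullet> X)" for W X Gm y
    using \<open>invertible \<rho>\<close> \<open>invertible \<sigma>\<close> MC1 MC2 MC3 by (rule ell_c_eq_ell)
  show "\<exists>D. GDERIV (\<lambda>X. ell I1 I2 I3 m M l g chi W X Gm y) X :> D" for W X Gm y
    using GDERIV_ell_v by blast
  show "v differentiable at t" if "t \<in> T" for t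
    using \<open>v C1_differentiable_on T\<close> \<open>open T\<close> that
    unfolding C1_differentiable_on_eq by blast
qed

end
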